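(* A strategy of the chair is regret-free if and only if it is efficient.
   Context: Let $\mathcal{X}$ be a finite set of alternatives. A proto-ranking is an irreflexive and transitive binary relation on $\mathcal{X}$; a ranking is a total proto-ranking; a tournament is a total and asymmetric binary relation on $\mathcal{X}$. The chair has a fixed preference $\succ$, which is a ranking on $\mathcal{X}$. Interaction: given a tournament $\mathrel{W}$, set $R_0=\varnothing$. In each period $t\geq 1$ in which $R_{t-1}$ is not total, the chair offers a pair $\{x,y\}$ of distinct alternatives unranked by $R_{t-1}$; the winner is $x$ if $x\mathrel{W}y$ and $y$ otherwise, and $R_t$ is the transitive closure of $R_{t-1}\cup\{(\text{winner},\text{loser})\}$. The process stops when $R_t$ is total. A history is a finite sequence of (winner, loser) pairs that can arise in this way; it is terminal if its induced proto-ranking is total. A strategy assigns to each non-terminal history a pair unranked at that history. The outcome of $\sigma$ under $\mathrel{W}$ is the final ranking. A ranking is $\mathrel{W}$-feasible if it is the outcome under $\mathrel{W}$ of some strategy. $R$ is more aligned with $\succ$ than $R'$ if for all $x\succ y$, $xR'y$ implies $xRy$. A ranking is $\mathrel{W}$-unimprovable if no other $\mathrel{W}$-feasible ranking is more aligned with $\succ$ than it. A strategy is regret-free if for every tournament $\mathrel{W}$ its outcome under $\mathrel{W}$ is $\mathrel{W}$-unimprovable. A ranking $R$ is $\mathrel{W}$-efficient if $x\succ y$ and $x\mathrel{W}y$ imply $xRy$; a strategy is efficient if for every tournament $\mathrel{W}$ its outcome under $\mathrel{W}$ is $\mathrel{W}$-efficient. *)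

theory Defs
  imports Main
begin

text \<open>Alternatives are the elements of a finite type 'a. Binary relations are sets of pairs.
  A pair (x,y) in a relation means x is ranked above y.\<close>

definition proto_ranking :: "'a rel \<Rightarrow> bool" where
  "proto_ranking R \<longleftrightarrow> irrefl R \<and> trans R"

definition ranking :: "'a rel \<Rightarrow> bool" where
  "ranking R \<longleftrightarrow> proto_ranking R \<and> total R"

definition tournament :: "'a rel \<Rightarrow> bool" where
  "tournament W \<longleftrightarrow> total W \<and> asym W"

text \<open>A history is a list of (winner, loser) pairs; its induced proto-ranking is the
  transitive closure of the set of these pairs.\<close>

definition induced :: "('a \<times> 'a) list \<Rightarrow> 'a rel" where
  "induced h = trancl (set h)"

definition unranked :: "'a rel \<Rightarrow> 'a \<times> 'a \<Rightarrow> bool" where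
  "unranked R p \<longleftrightarrow> fst p \<noteq> snd p \<and> p \<notin> R \<and> (snd p, fst p) \<notin> R"

definition terminal :: "('a \<times> 'a) list \<Rightarrow> bool" where
  "terminal h \<longleftrightarrow> total (induced h)"

text \<open>Histories: sequences that can arise from the interaction (for some tournament and some
  choices of the chair).  Since each offered pair is unranked, no unordered pair is offered
  twice, so any orientation of the offered pair can be realised by some tournament.\<close>

inductive is_history :: "('a \<times> 'a) list \<Rightarrow> bool" where
  Nil: "is_history []"
| snoc: "is_history h \<Longrightarrow> \<not> terminal h \<Longrightarrow> unranked (induced h) (x, y)
           \<Longrightarrow> is_history (h @ [(x, y)])"

text \<open>A strategy maps histories to (ordered representations of) pairs {x,y}; it is a valid
  strategy if at every non-terminal history it offers a pair unranked at that history.\<close>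

type_synonym 'a strategy = "('a \<times> 'a) list \<Rightarrow> 'a \<times> 'a"

definition strategy :: "'a strategy \<Rightarrow> bool" where
  "strategy \<sigma> \<longleftrightarrow> (\<forall>h. is_history h \<and> \<not> terminal h \<longrightarrow> unranked (induced h) (\<sigma> h))"

definition winner_loser :: "'a rel \<Rightarrow> 'a \<times> 'a \<Rightarrow> 'a \<times> 'a" where
  "winner_loser W p = (if p \<in> W then p else (snd p, fst p))"

inductive reach :: "'a strategy \<Rightarrow> 'a rel \<Rightarrow> ('a \<times> 'a) list \<Rightarrow> bool"
  for \<sigma> W where
  Nil: "reach \<sigma> W []"
| snoc: "reach \<sigma> W h \<Longrightarrow> \<not> terminal h \<Longrightarrow> reach \<sigma> W (h @ [winner_loser W (\<sigma> h)])"

definition outcome :: "'a strategy \<Rightarrow> 'a rel \<Rightarrow> 'a rel" where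
  "outcome \<sigma> W = induced (THE h. reach \<sigma> W h \<and> terminal h)"

definition feasible :: "'a rel \<Rightarrow> 'a rel \<Rightarrow> bool" where
  "feasible W R \<longleftrightarrow> ranking R \<and> (\<exists>\<sigma>. strategy \<sigma> \<and> outcome \<sigma> W = R)"

definition more_aligned :: "'a rel \<Rightarrow> 'a rel \<Rightarrow> 'a rel \<Rightarrow> bool" where
  "more_aligned P R R' \<longleftrightarrow> (\<forall>x y. (x, y) \<in> P \<longrightarrow> (x, y) \<in> R' \<longrightarrow> (x, y) \<in> R)"

definition unimprovable :: "'a rel \<Rightarrow> 'a rel \<Rightarrow> 'a rel \<Rightarrow> bool" where
  "unimprovable P W R \<longleftrightarrow>
     \<not> (\<exists>R'. feasible W R' \<and> R' \<noteq> R \<and> more_aligned P R' R)"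

definition regret_free :: "'a rel \<Rightarrow> 'a strategy \<Rightarrow> bool" where
  "regret_free P \<sigma> \<longleftrightarrow> (\<forall>W. tournament W \<longrightarrow> unimprovable P W (outcome \<sigma> W))"

definition W_efficient :: "'a rel \<Rightarrow> 'a rel \<Rightarrow> 'a rel \<Rightarrow> bool" where
  "W_efficient P W R \<longleftrightarrow> (\<forall>x y. (x, y) \<in> P \<longrightarrow> (x, y) \<in> W \<longrightarrow> (x, y) \<in> R)"

definition efficient :: "'a rel \<Rightarrow> 'a strategy \<Rightarrow> bool" where
  "efficient P \<sigma> \<longleftrightarrow> (\<forall>W. tournament W \<longrightarrow> W_efficient P W (outcome \<sigma> W))"

end

theory Submission
  imports Defs "HOL-Library.Sublist"
begin

text \<open>A ranking R is W-feasible exactly when every covering pair of R (two alternatives adjacent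
  in R) is a W-edge: the covering pairs of the transitive closure of the played pairs were
  themselves played, and conversely a chair who keeps offering unranked covering pairs of R never
  leaves R.

  If R' is feasible and more aligned than an efficient outcome R, then every covering pair of R'
  lies in R: when it is P-aligned by efficiency, otherwise because its reversal in R would have to
  be in R' as well. Hence R' \<subseteq> R, and both being rankings, R' = R.

  Conversely, let \<sigma> be regret-free and reorient every pair that the play under W never offered
  according to P. The play, hence the outcome R, does not change. Inserting the alternatives from
  P-best to P-worst, each directly below the lowest alternative beating it, gives a feasible
  efficient ranking for the new tournament, which is more aligned than R and therefore equal to R.
  So R ranks every pair on which P and W agree the way they do.\<close>

section \<open>Covering pairs of finite strict orders\<close>

definition covering_rel :: "'a rel \<Rightarrow> 'a rel" where
  "covering_rel R = {(x, y). (x, y) \<in> R \<and> \<not> (\<exists>z. (x, z) \<in> R \<and> (z, y) \<in> R)}"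

lemma rankingD:
  assumes "ranking R"
  shows "trans R" "irrefl R" "asym R" "total R"
  using assms asym_on_iff_irrefl_on_if_trans_on[of UNIV R]
  unfolding ranking_def proto_ranking_def by auto

lemma ranking_not_mem_iff:
  assumes "ranking R" "x \<noteq> y"
  shows "(x, y) \<notin> R \<longleftrightarrow> (y, x) \<in> R"
  using rankingD[OF assms(1)] assms(2) unfolding total_on_def by (auto dest: asymD)

lemma ranking_imp_tournament: "ranking R \<Longrightarrow> tournament R"
  unfolding tournament_def by (simp add: rankingD)

lemma total_subset_asym_eq:
  assumes "total Q" "Q \<subseteq> R" "asym R"
  shows "Q = R"
proof
  show "R \<subseteq> Q"
  proof
    fix p assume "p \<in> R"
    moreover obtain a b where p: "p = (a, b)" by fastforce
    ultimately have "a \<noteq> b" "(b, a) \<notin> Q" using assms(2,3) by (auto dest: asymD)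
    then show "p \<in> Q" using assms(1) p unfolding total_on_def by blast
  qed
qed (rule assms(2))

lemma covering_rel_subset: "covering_rel R \<subseteq> R"
  unfolding covering_rel_def by blast

lemma covering_rel_trancl_subset: "covering_rel (r\<^sup>+) \<subseteq> r"
  unfolding covering_rel_def by (auto elim: tranclE)

lemma trancl_covering_rel:
  assumes "finite R" "trans R" "irrefl R"
  shows "(covering_rel R)\<^sup>+ = R"
proof
  show "(covering_rel R)\<^sup>+ \<subseteq> R"
    using trancl_mono_subset[OF covering_rel_subset, of R] assms(2) by simp
next
  have "acyclic R" using assms(2,3) by (simp add: acyclic_irrefl)
  then have wf: "wf R" "wf (R\<inverse>)"
    using assms(1) by (simp_all add: finite_acyclic_wf finite_acyclic_wf_converse)
  have "(x, y) \<in> (covering_rel R)\<^sup>+" if "(x, y) \<in> R" for x y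
    using wf(2) that
  proof (induction x arbitrary: y rule: wf_induct_rule)
    case (less x)
    define between where "between = {z. (x, z) \<in> R \<and> (z, y) \<in> R}"
    show ?case
    proof (cases "between = {}")
      case True
      then have "(x, y) \<in> covering_rel R" using less.prems by (auto simp: covering_rel_def between_def)
      then show ?thesis by (rule r_into_trancl)
    next
      case False
      \<comment> \<open>the element of the interval closest to x covers it\<close>
      then obtain z where z: "z \<in> between" and closest: "\<And>w. (w, z) \<in> R \<Longrightarrow> w \<notin> between"
        using wfE_min'[OF wf(1)] by blast
      have "(w, y) \<in> R" if "(w, z) \<in> R" for w
        using that z assms(2) unfolding between_def by (blast dest: transD)
      then have "(x, z) \<in> covering_rel R"
        using z closest unfolding covering_rel_def between_def by blast
      moreover have "(z, y) \<in> (covering_rel R)\<^sup>+"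
        using less.IH z unfolding between_def by blast
      ultimately show ?thesis by (rule trancl_into_trancl2)
    qed
  qed
  then show "R \<subseteq> (covering_rel R)\<^sup>+" by auto
qed

lemma subset_if_covering_rel_subset:
  assumes "finite R" "trans R" "irrefl R" "trans T" "covering_rel R \<subseteq> T"
  shows "R \<subseteq> T"
proof -
  have "R = (covering_rel R)\<^sup>+" using assms(1-3) by (simp add: trancl_covering_rel)
  also have "\<dots> \<subseteq> T\<^sup>+" using assms(5) by (rule trancl_mono_subset)
  also have "\<dots> = T" using assms(4) by simp
  finally show ?thesis .
qed

lemma ranking_obtain_bottom:
  fixes P :: "('a::finite) rel"
  assumes "ranking P" "v0 \<in> A"
  obtains v where "v \<in> A" "\<And>x. x \<in> A \<Longrightarrow> x \<noteq> v \<Longrightarrow> (x, v) \<in> P"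
proof -
  have "acyclic P" using rankingD[OF assms(1)] by (simp add: acyclic_irrefl)
  then have "wf (P\<inverse>)" by (simp add: finite_acyclic_wf_converse)
  then obtain v where "v \<in> A" and bottom: "\<And>x. (x, v) \<in> P\<inverse> \<Longrightarrow> x \<notin> A"
    using wfE_min[OF _ assms(2)] by blast
  moreover have "(x, v) \<in> P" if "x \<in> A" "x \<noteq> v" for x
    using bottom[of x] that ranking_not_mem_iff[OF assms(1), of v x] by auto
  ultimately show thesis using that by blast
qed

section \<open>Chains in tournaments\<close>

lemma strict_linear_order_on_insert_cut:
  assumes R: "strict_linear_order_on A R" "R \<subseteq> A \<times> A"
    and v: "v \<notin> A" and U: "U \<subseteq> A" "\<And>a u. (a, u) \<in> R \<Longrightarrow> u \<in> U \<Longrightarrow> a \<in> U"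
  shows "strict_linear_order_on (insert v A) (R \<union> U \<times> {v} \<union> {v} \<times> (A - U))"
proof -
  have above: "(u, w) \<in> R" if "u \<in> U" "w \<in> A - U" for u w
  proof -
    have "u \<noteq> w" "(w, u) \<notin> R" using that U(2) by auto
    then show ?thesis using that R(1) U(1) unfolding strict_linear_order_on_def total_on_def by blast
  qed
  let ?S = "R \<union> U \<times> {v} \<union> {v} \<times> (A - U)"
  have "trans ?S"
  proof (rule transI)
    fix a b c assume ab: "(a, b) \<in> ?S" and bc: "(b, c) \<in> ?S"
    have "trans R" using R(1) unfolding strict_linear_order_on_def by blast
    consider "(a, b) \<in> R" | "a \<in> U" "b = v" | "a = v" "b \<in> A - U" using ab by blast
    then show "(a, c) \<in> ?S"
    proof cases
      case 1
      then show ?thesis using bc R(2) v U(2) \<open>trans R\<close> by (blast dest: transD)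
    next
      case 2
      then show ?thesis using bc R(2) v above by blast
    next
      case 3
      then show ?thesis using bc R(2) v U(2) by blast
    qed
  qed
  moreover have "irrefl ?S" "total_on (insert v A) ?S"
    using R v U unfolding strict_linear_order_on_def irrefl_def total_on_def by blast+
  ultimately show ?thesis unfolding strict_linear_order_on_def by blast
qed

lemma tournament_chain_insert:
  assumes W: "tournament W"
    and R: "strict_linear_order_on A R" "R \<subseteq> A \<times> A" "covering_rel R \<subseteq> W"
    and v: "v \<notin> A"
  obtains R' where "strict_linear_order_on (insert v A) R'" "R' \<subseteq> insert v A \<times> insert v A"
    "covering_rel R' \<subseteq> W" "R \<subseteq> R'" "\<And>x. x \<in> A \<Longrightarrow> (x, v) \<in> W \<Longrightarrow> (x, v) \<in> R'"
proof -
  \<comment> \<open>v goes directly below the lowest alternative that beats it\<close>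
  define U where "U = {u \<in> A. \<exists>w \<in> A. (u = w \<or> (u, w) \<in> R) \<and> (w, v) \<in> W}"
  define R' where "R' = R \<union> U \<times> {v} \<union> {v} \<times> (A - U)"
  have "trans R" using R(1) unfolding strict_linear_order_on_def by blast
  have up: "a \<in> U" if "(a, u) \<in> R" "u \<in> U" for a u
    using that R(2) \<open>trans R\<close> unfolding U_def by (blast dest: transD)
  have "U \<subseteq> A" unfolding U_def by blast
  with R(1,2) v have "strict_linear_order_on (insert v A) R'"
    unfolding R'_def using up by (rule strict_linear_order_on_insert_cut)
  moreover have "covering_rel R' \<subseteq> W"
  proof (rule subsetI, clarify)
    fix x y assume "(x, y) \<in> covering_rel R'"
    then have xy: "(x, y) \<in> R'" and gap: "\<And>z. (x, z) \<in> R' \<Longrightarrow> (z, y) \<notin> R'"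
      unfolding covering_rel_def by blast+
    consider "(x, y) \<in> R" | "x \<in> U" "y = v" | "x = v" "y \<in> A - U"
      using xy unfolding R'_def by blast
    then show "(x, y) \<in> W"
    proof cases
      case 1
      then have "(x, y) \<in> covering_rel R" using gap unfolding covering_rel_def R'_def by blast
      then show ?thesis using R(3) by blast
    next
      case 2
      then obtain w where w: "w \<in> A" "x = w \<or> (x, w) \<in> R" "(w, v) \<in> W"
        unfolding U_def by blast
      have "w \<in> U" using w unfolding U_def by blast
      then have "(w, y) \<in> R'" using 2 unfolding R'_def by blast
      then have "x = w" using w(2) gap unfolding R'_def by blast
      then show ?thesis using w(3) 2 by simp
    next
      case 3
      then have "(y, v) \<notin> W" "y \<noteq> v" using v unfolding U_def by blast+
      then show ?thesis using W 3 unfolding tournament_def total_on_def by blast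
    qed
  qed
  moreover have "R' \<subseteq> insert v A \<times> insert v A" "R \<subseteq> R'"
    using R(2) unfolding R'_def U_def by blast+
  moreover have "(x, v) \<in> R'" if "x \<in> A" "(x, v) \<in> W" for x
    using that unfolding R'_def U_def by blast
  ultimately show thesis using that by blast
qed

lemma ex_efficient_chain_on:
  fixes P W :: "('a::finite) rel"
  assumes W: "tournament W" and P: "ranking P"
  shows "\<exists>R. strict_linear_order_on A R \<and> R \<subseteq> A \<times> A \<and> covering_rel R \<subseteq> W \<and>
    P \<inter> W \<inter> A \<times> A \<subseteq> R"
  using finite[of A]
proof (induction A rule: finite_remove_induct)
  case empty
  show ?case by (auto simp: strict_linear_order_on_def covering_rel_def)
next
  case (remove A)
  \<comment> \<open>insert the P-worst alternative last\<close>
  obtain v where v: "v \<in> A" and worst: "\<And>x. x \<in> A \<Longrightarrow> x \<noteq> v \<Longrightarrow> (x, v) \<in> P"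
    using ranking_obtain_bottom[OF P] remove.hyps(2) by blast
  obtain R0 where R0: "strict_linear_order_on (A - {v}) R0" "R0 \<subseteq> (A - {v}) \<times> (A - {v})"
    "covering_rel R0 \<subseteq> W" "P \<inter> W \<inter> (A - {v}) \<times> (A - {v}) \<subseteq> R0"
    using remove.IH[OF v] by blast
  have A: "insert v (A - {v}) = A" using v by blast
  obtain R where R: "strict_linear_order_on A R" "R \<subseteq> A \<times> A" "covering_rel R \<subseteq> W" "R0 \<subseteq> R"
    and below_v: "\<And>x. x \<in> A - {v} \<Longrightarrow> (x, v) \<in> W \<Longrightarrow> (x, v) \<in> R"
    using tournament_chain_insert[OF W R0(1-3), of v, unfolded A] by blast
  have "(x, y) \<in> R" if "(x, y) \<in> P" "(x, y) \<in> W" "x \<in> A" "y \<in> A" for x y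
  proof -
    have "x \<noteq> v" using worst[of y] that rankingD(3)[OF P] by (auto dest: asymD)
    then show ?thesis using that below_v R0(4) R(4) by blast
  qed
  then show ?case using R(1-3) by blast
qed

section \<open>Plays and outcomes\<close>

lemma unranked_winner_loser [simp]: "unranked R (winner_loser W p) \<longleftrightarrow> unranked R p"
  unfolding winner_loser_def unranked_def by auto

lemma winner_loser_mem:
  assumes "tournament W" "fst p \<noteq> snd p"
  shows "winner_loser W p \<in> W"
  using assms unfolding tournament_def winner_loser_def total_on_def by (cases p) auto

lemma winner_loser_eq:
  assumes "winner_loser W p \<in> W'" "asym W'"
  shows "winner_loser W' p = winner_loser W p"
  using assms unfolding winner_loser_def by (cases p) (auto dest: asymD)

lemma is_history_distinct: "is_history h \<Longrightarrow> distinct h"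
  by (induction rule: is_history.induct) (auto simp: unranked_def induced_def)

lemma is_history_acyclic: "is_history h \<Longrightarrow> acyclic (set h)"
proof (induction rule: is_history.induct)
  case Nil
  show ?case by (simp add: acyclic_def)
next
  case (snoc h x y)
  then have "(y, x) \<notin> (set h)\<^sup>*" by (auto simp: unranked_def induced_def rtrancl_eq_or_trancl)
  then show ?case using snoc.IH by simp
qed

lemma ranking_induced:
  assumes "is_history h" "terminal h"
  shows "ranking (induced h)"
  using is_history_acyclic[OF assms(1)] assms(2)
  unfolding ranking_def proto_ranking_def terminal_def induced_def
  by (simp add: acyclic_irrefl)

lemma reach_is_history:
  assumes "strategy \<sigma>" "reach \<sigma> W h"
  shows "is_history h"
  using assms(2)
proof (induction rule: reach.induct)
  case Nil
  show ?case by (rule is_history.Nil)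
next
  case (snoc h)
  then have "unranked (induced h) (winner_loser W (\<sigma> h))"
    using assms(1) unfolding strategy_def by simp
  then show ?case using is_history.snoc[OF snoc.IH snoc.hyps(2)] by (metis prod.collapse)
qed

lemma reach_unranked:
  assumes "strategy \<sigma>" "reach \<sigma> W h" "\<not> terminal h"
  shows "unranked (induced h) (\<sigma> h)"
  using assms reach_is_history[OF assms(1,2)] unfolding strategy_def by blast

lemma reach_snoc_iff:
  "reach \<sigma> W (h @ [p]) \<longleftrightarrow> reach \<sigma> W h \<and> \<not> terminal h \<and> p = winner_loser W (\<sigma> h)"
  by (auto elim: reach.cases intro: reach.snoc)

lemma reach_appendD: "reach \<sigma> W (h @ h') \<Longrightarrow> reach \<sigma> W h"
  by (induction h' rule: rev_induct) (auto simp: reach_snoc_iff simp flip: append_assoc)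

lemma reach_prefix_linear:
  assumes "reach \<sigma> W h1" "reach \<sigma> W h2"
  shows "prefix h1 h2 \<or> prefix h2 h1"
  using assms(2)
proof (induction rule: reach.induct)
  case Nil
  show ?case by simp
next
  case (snoc h)
  show ?case using snoc.IH
  proof
    assume "prefix h h1"
    then obtain t where h1: "h1 = h @ t" by (rule prefixE)
    show ?thesis
    proof (cases t)
      case (Cons p t')
      then have "reach \<sigma> W (h @ [p])" using assms(1) h1 reach_appendD[of \<sigma> W "h @ [p]" t'] by simp
      then show ?thesis using h1 Cons by (simp add: reach_snoc_iff)
    qed (use h1 in simp)
  qed simp
qed

lemma reach_terminal_unique:
  assumes "reach \<sigma> W h1" "terminal h1" "reach \<sigma> W h2" "terminal h2"
  shows "h1 = h2"
proof -
  have "h = h'" if "prefix h h'" "reach \<sigma> W h'" "terminal h" for h h'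
  proof (rule ccontr)
    assume "h \<noteq> h'"
    moreover obtain t where "h' = h @ t" using \<open>prefix h h'\<close> unfolding prefix_def by blast
    ultimately obtain p t' where "h' = (h @ [p]) @ t'" by (cases t) auto
    then have "reach \<sigma> W (h @ [p])" using \<open>reach \<sigma> W h'\<close> reach_appendD by blast
    then show False using \<open>terminal h\<close> by (simp add: reach_snoc_iff)
  qed
  then show ?thesis using reach_prefix_linear[OF assms(1,3)] assms by metis
qed

lemma reach_length_le:
  fixes h :: "('a::finite \<times> 'a) list"
  assumes "strategy \<sigma>" "reach \<sigma> W h"
  shows "length h \<le> card (UNIV :: ('a \<times> 'a) set)"
  using is_history_distinct[OF reach_is_history[OF assms]] card_mono[of UNIV "set h"]
  by (simp add: distinct_card)

lemma reach_terminal_exists: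
  fixes W :: "('a::finite) rel"
  assumes "strategy \<sigma>"
  shows "\<exists>h. reach \<sigma> W h \<and> terminal h"
proof -
  let ?N = "card (UNIV :: ('a \<times> 'a) set)"
  have "\<exists>h'. reach \<sigma> W h' \<and> terminal h'" if "reach \<sigma> W h" for h
    using that
  proof (induction "?N - length h" arbitrary: h rule: less_induct)
    case less
    show ?case
    proof (cases "terminal h")
      case False
      let ?h' = "h @ [winner_loser W (\<sigma> h)]"
      have "reach \<sigma> W ?h'" using less.prems False by (rule reach.snoc)
      moreover have "length ?h' \<le> ?N" using reach_length_le[OF assms calculation] .
      then have "?N - length ?h' < ?N - length h" by simp
      ultimately show ?thesis using less.hyps by blast
    qed (use less.prems in blast)
  qed
  then show ?thesis using reach.Nil by blast
qed

lemma outcome_eq: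
  assumes "reach \<sigma> W h" "terminal h"
  shows "outcome \<sigma> W = induced h"
proof -
  have "(THE h. reach \<sigma> W h \<and> terminal h) = h"
    using assms reach_terminal_unique by blast
  then show ?thesis unfolding outcome_def by simp
qed

lemma outcomeE:
  fixes W :: "('a::finite) rel"
  assumes "strategy \<sigma>"
  obtains h where "reach \<sigma> W h" "terminal h" "outcome \<sigma> W = induced h"
  using reach_terminal_exists[OF assms] outcome_eq by blast

lemma ranking_outcome:
  fixes W :: "('a::finite) rel"
  assumes "strategy \<sigma>"
  shows "ranking (outcome \<sigma> W)"
  using assms by (metis outcomeE ranking_induced reach_is_history)

lemma reach_subset_tournament:
  assumes "tournament W" "strategy \<sigma>" "reach \<sigma> W h"
  shows "set h \<subseteq> W"
  using assms(3)
proof (induction rule: reach.induct)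
  case (snoc h)
  then have "fst (\<sigma> h) \<noteq> snd (\<sigma> h)" using reach_unranked[OF assms(2)] unranked_def by blast
  then show ?case using snoc.IH winner_loser_mem[OF assms(1)] by simp
qed simp

lemma reach_transfer:
  assumes "reach \<sigma> W h" "set h \<subseteq> W'" "asym W'"
  shows "reach \<sigma> W' h"
  using assms(1,2)
proof (induction rule: reach.induct)
  case (snoc h)
  then show ?case using reach.snoc[of \<sigma> W' h] winner_loser_eq[of W "\<sigma> h" W', OF _ assms(3)] by simp
qed (rule reach.Nil)

section \<open>Feasible rankings\<close>

lemma induced_subset: "set h \<subseteq> R \<Longrightarrow> trans R \<Longrightarrow> induced h \<subseteq> R"
  unfolding induced_def by (metis trancl_id trancl_mono_subset)

lemma ex_unranked_covering_pair:
  fixes R :: "('a::finite) rel"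
  assumes "ranking R" "set h \<subseteq> R" "\<not> terminal h"
  shows "\<exists>p \<in> covering_rel R. unranked (induced h) p"
proof (rule ccontr)
  assume none: "\<not> ?thesis"
  have induced: "induced h \<subseteq> R" using induced_subset assms(1,2) rankingD(1) by blast
  have "covering_rel R \<subseteq> induced h"
  proof (rule subrelI)
    fix x y assume xy: "(x, y) \<in> covering_rel R"
    then have "(x, y) \<in> R" unfolding covering_rel_def by blast
    then have "x \<noteq> y" "(y, x) \<notin> induced h"
      using induced rankingD(2,3)[OF assms(1)] by (auto simp: irrefl_def dest: asymD)
    then show "(x, y) \<in> induced h" using xy none unfolding unranked_def by auto
  qed
  then have "R \<subseteq> induced h"
    using subset_if_covering_rel_subset[OF finite rankingD(1,2)[OF assms(1)]]
    unfolding induced_def by simp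
  then show False
    using assms(3) rankingD(4)[OF assms(1)] unfolding terminal_def total_on_def by blast
qed

lemma obtain_strategy_with_outcome:
  fixes W R :: "('a::finite) rel"
  assumes R: "ranking R" and covering: "covering_rel R \<subseteq> W"
  obtains \<sigma> where "strategy \<sigma>" "outcome \<sigma> W = R"
proof -
  \<comment> \<open>offer an unranked covering pair of R as long as the history stays inside R\<close>
  have "\<exists>p. unranked (induced h) p \<and> (set h \<subseteq> R \<longrightarrow> p \<in> covering_rel R)"
    if not_terminal: "\<not> terminal h" for h
  proof (cases "set h \<subseteq> R")
    case True
    then show ?thesis using ex_unranked_covering_pair[OF R True not_terminal] by blast
  next
    case False
    obtain x y where "unranked (induced h) (x, y)"
      using not_terminal unfolding terminal_def total_on_def unranked_def by auto
    then show ?thesis using False by blast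
  qed
  then obtain \<sigma> where \<sigma>: "\<And>h. \<not> terminal h \<Longrightarrow>
      unranked (induced h) (\<sigma> h) \<and> (set h \<subseteq> R \<longrightarrow> \<sigma> h \<in> covering_rel R)"
    by metis
  have strategy: "strategy \<sigma>" using \<sigma> unfolding strategy_def by blast
  have "set h \<subseteq> R" if "reach \<sigma> W h" for h
    using that
  proof (induction rule: reach.induct)
    case (snoc h)
    then have "\<sigma> h \<in> covering_rel R" using \<sigma> by blast
    then have "\<sigma> h \<in> R \<inter> W" using covering covering_rel_subset by blast
    then show ?case using snoc.IH unfolding winner_loser_def by simp
  qed simp
  moreover obtain h where "reach \<sigma> W h" "terminal h" "outcome \<sigma> W = induced h"
    using outcomeE[OF strategy] .
  ultimately have "induced h \<subseteq> R" using induced_subset rankingD(1)[OF R] by blast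
  then have "outcome \<sigma> W = R"
    using total_subset_asym_eq[OF _ _ rankingD(3)[OF R]] \<open>terminal h\<close> \<open>outcome \<sigma> W = induced h\<close>
    unfolding terminal_def by blast
  with strategy show thesis by (rule that)
qed

lemma feasible_iff_covering_rel_subset:
  fixes W R :: "('a::finite) rel"
  assumes "tournament W"
  shows "feasible W R \<longleftrightarrow> ranking R \<and> covering_rel R \<subseteq> W"
proof
  assume "feasible W R"
  then obtain \<sigma> where "ranking R" "strategy \<sigma>" "outcome \<sigma> W = R" unfolding feasible_def by blast
  moreover obtain h where "reach \<sigma> W h" "terminal h" "outcome \<sigma> W = induced h"
    using outcomeE[OF \<open>strategy \<sigma>\<close>] .
  ultimately have "covering_rel R \<subseteq> set h"
    using covering_rel_trancl_subset[of "set h"] unfolding induced_def by simp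
  also have "set h \<subseteq> W" using reach_subset_tournament[OF assms \<open>strategy \<sigma>\<close> \<open>reach \<sigma> W h\<close>] .
  finally show "ranking R \<and> covering_rel R \<subseteq> W" using \<open>ranking R\<close> by blast
next
  assume "ranking R \<and> covering_rel R \<subseteq> W"
  then obtain \<sigma> where "strategy \<sigma>" "outcome \<sigma> W = R"
    using obtain_strategy_with_outcome by blast
  with \<open>ranking R \<and> covering_rel R \<subseteq> W\<close> show "feasible W R" unfolding feasible_def by blast
qed

lemma ex_feasible_efficient:
  fixes W P :: "('a::finite) rel"
  assumes "tournament W" "ranking P"
  obtains R where "feasible W R" "W_efficient P W R"
proof -
  obtain R where "strict_linear_order_on UNIV R" "covering_rel R \<subseteq> W" "P \<inter> W \<subseteq> R"
    using ex_efficient_chain_on[OF assms, of UNIV] by auto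
  then show thesis
    using that feasible_iff_covering_rel_subset[OF assms(1)]
    unfolding W_efficient_def ranking_def proto_ranking_def strict_linear_order_on_def by blast
qed

lemma tournament_override:
  assumes "asym S" "tournament T"
  shows "tournament (S \<union> {(x, y) \<in> T. (y, x) \<notin> S})"
  using assms unfolding tournament_def total_on_def by (auto dest: asymD)

lemma efficient_imp_regret_free:
  fixes P :: "('a::finite) rel" and \<sigma> :: "'a strategy"
  assumes P: "ranking P" and \<sigma>: "strategy \<sigma>" "efficient P \<sigma>"
  shows "regret_free P \<sigma>"
  unfolding regret_free_def unimprovable_def
proof (intro allI impI)
  fix W :: "'a rel" assume W: "tournament W"
  let ?R = "outcome \<sigma> W"
  have R: "ranking ?R" using ranking_outcome[OF \<sigma>(1)] .
  have "R' = ?R" if R': "feasible W R'" and aligned: "more_aligned P R' ?R" for R'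
  proof -
    have "ranking R'" "covering_rel R' \<subseteq> W"
      using R' feasible_iff_covering_rel_subset[OF W] by blast+
    have "covering_rel R' \<subseteq> ?R"
    proof (rule subrelI)
      fix a b assume ab: "(a, b) \<in> covering_rel R'"
      then have "(a, b) \<in> R'" "(a, b) \<in> W" using covering_rel_subset \<open>covering_rel R' \<subseteq> W\<close> by blast+
      then have "a \<noteq> b" using rankingD(2)[OF \<open>ranking R'\<close>] unfolding irrefl_def by blast
      show "(a, b) \<in> ?R"
      proof (cases "(a, b) \<in> P")
        case True
        then show ?thesis using \<sigma>(2) W \<open>(a, b) \<in> W\<close> unfolding efficient_def W_efficient_def by blast
      next
        case False
        \<comment> \<open>otherwise (b, a) would be a P-aligned pair of the outcome, hence of R'\<close>
        then have "(b, a) \<in> P" using ranking_not_mem_iff[OF P \<open>a \<noteq> b\<close>] by blast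
        then have "(b, a) \<notin> ?R"
          using aligned \<open>(a, b) \<in> R'\<close> rankingD(3)[OF \<open>ranking R'\<close>]
          unfolding more_aligned_def by (blast dest: asymD)
        then show ?thesis using ranking_not_mem_iff[OF R \<open>a \<noteq> b\<close>] by blast
      qed
    qed
    then have "R' \<subseteq> ?R"
      using subset_if_covering_rel_subset[OF finite rankingD(1,2)[OF \<open>ranking R'\<close>] rankingD(1)[OF R]]
      by blast
    then show "R' = ?R" using total_subset_asym_eq rankingD(3,4) R \<open>ranking R'\<close> by blast
  qed
  then show "\<not> (\<exists>R'. feasible W R' \<and> R' \<noteq> ?R \<and> more_aligned P R' ?R)" by blast
qed

lemma regret_free_imp_efficient:
  fixes P :: "('a::finite) rel" and \<sigma> :: "'a strategy"
  assumes P: "ranking P" and \<sigma>: "strategy \<sigma>" "regret_free P \<sigma>"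
  shows "efficient P \<sigma>"
  unfolding efficient_def W_efficient_def
proof (intro allI impI)
  fix W x y assume W: "tournament W" and xy: "(x, y) \<in> P" "(x, y) \<in> W"
  obtain h where h: "reach \<sigma> W h" "terminal h" and R: "outcome \<sigma> W = induced h"
    using outcomeE[OF \<sigma>(1)] .
  have "set h \<subseteq> W" using reach_subset_tournament[OF W \<sigma>(1) h(1)] .
  then have "asym (set h)" using W unfolding tournament_def by (auto dest: asymD)
  define W' where "W' = set h \<union> {(a, b) \<in> P. (b, a) \<notin> set h}"
  have W': "tournament W'"
    unfolding W'_def using tournament_override \<open>asym (set h)\<close> ranking_imp_tournament[OF P] .
  have "reach \<sigma> W' h"
    using reach_transfer[OF h(1)] W' unfolding W'_def tournament_def by blast
  then have R': "outcome \<sigma> W' = induced h" using outcome_eq[OF _ h(2)] by blast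
  obtain Q where Q: "feasible W' Q" "W_efficient P W' Q"
    using ex_feasible_efficient[OF W' P] .
  have "more_aligned P Q (induced h)"
    unfolding more_aligned_def
  proof (intro allI impI)
    fix a b assume "(a, b) \<in> P" "(a, b) \<in> induced h"
    then have "(b, a) \<notin> set h"
      using rankingD(3)[OF ranking_induced[OF reach_is_history[OF \<sigma>(1) h(1)] h(2)]]
      unfolding induced_def by (blast dest: asymD)
    then show "(a, b) \<in> Q" using Q(2) \<open>(a, b) \<in> P\<close> unfolding W_efficient_def W'_def by blast
  qed
  then have "Q = induced h"
    using \<sigma>(2) W' Q(1) R' unfolding regret_free_def unimprovable_def by metis
  moreover have "(x, y) \<in> Q"
  proof -
    have "(y, x) \<notin> set h"
      using \<open>set h \<subseteq> W\<close> xy(2) W unfolding tournament_def by (blast dest: asymD)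
    then show ?thesis using Q(2) xy(1) unfolding W_efficient_def W'_def by blast
  qed
  ultimately show "(x, y) \<in> outcome \<sigma> W" using R by simp
qed

theorem theorem2:
  fixes P :: "('a::finite) rel" and \<sigma> :: "'a strategy"
  assumes "ranking P" and "strategy \<sigma>"
  shows "regret_free P \<sigma> \<longleftrightarrow> efficient P \<sigma>"
  using regret_free_imp_efficient efficient_imp_regret_free assms by blast

end
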